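(* Let $n\ge1$ and let $M=M(h)$ be an $n\times n$ complex matrix of the form $M=D(I_n+E(h))D$, where $D(h)=\operatorname{diag}(\nu_j(h))$ is diagonal with $\nu_j(h)\in\mathbb C$ and $E(h)=\mathcal O(h^\infty)$ as $h\to0$. Then the eigenvalues of $M$ are of the form $\nu_j^2(h)(1+\mathcal O(h^\infty))$.
   Context: $E(h)=\mathcal O(h^\infty)$ means that for every $N$ there is $C_N$ with $\|E(h)\|\le C_Nh^N$ for $h$ small enough. *)

theory Defs
  imports "HOL-Analysis.Analysis"
begin

definition diag_mat :: "('n::finite \<Rightarrow> complex) \<Rightarrow> complex^'n^'n" where
  "diag_mat d = (\<chi> i j. if i = j then d j else 0)"

text \<open>lam enumerates the eigenvalues of A counted with algebraic multiplicity,
  i.e. the characteristic polynomial det (x I - A) factors as the product of (x - lam j).\<close>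
definition eigenvalues_enum :: "complex^'n^'n \<Rightarrow> ('n::finite \<Rightarrow> complex) \<Rightarrow> bool" where
  "eigenvalues_enum A lam \<longleftrightarrow> (\<forall>x. det (mat x - A) = (\<Prod>j\<in>UNIV. x - lam j))"

definition O_h_infty :: "(real \<Rightarrow> 'a::real_normed_vector) \<Rightarrow> bool" where
  "O_h_infty f \<longleftrightarrow> (\<forall>N::nat. \<exists>C. \<forall>\<^sub>F h in at_right 0. norm (f h) \<le> C * h ^ N)"

end

theory Submission
  imports Defs "HOL-Computational_Algebra.Fundamental_Theorem_Algebra"
begin

(* Write a_j = nu_j^2 and eps = norm E. In the Leibniz expansion of det (x I - M) the identity
   permutation gives the product of the x - a_j (1 + E_jj); for any other permutation sigma the
   off-diagonal entries nu_i E_(i,sigma i) nu_(sigma i) carry a factor eps, and since sigma permutes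
   the indices their weights multiply up to products of the |a_j|. Hence the coefficients of
   charpoly M - prod (x - a_j) are bounded by C eps times those of prod (x + |a_j|).

   Such a perturbation moves the roots only by a relative amount. Suppose the bound is
   theta^(n (q + 1)) times prod (x + |a_j|), n being the degree, and let |a_j0| be the largest.
   Evaluating at a_j0 yields a root b_l with |b_l - a_j0| <= 2 theta^(q + 1) |a_j0|; dividing out
   x - a_j0 and x - b_l leaves polynomials whose difference is bounded by theta^q times
   prod (x + |a_j|) over the remaining j. Induction on n matches every a_j with a root b_(sigma j)
   within K theta |a_j|. With theta = (C eps)^(1/(p+1)), which is O(h^oo) together with eps, this is
   the claim. *)

section \<open>Coefficientwise majorants of polynomials\<close>

definition coeff_dominated :: "'a::real_normed_field poly \<Rightarrow> real poly \<Rightarrow> bool" where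
  "coeff_dominated g G \<longleftrightarrow> (\<forall>k. norm (coeff g k) \<le> coeff G k)"

definition coeff_le :: "real poly \<Rightarrow> real poly \<Rightarrow> bool" where
  "coeff_le F G \<longleftrightarrow> (\<forall>k. coeff F k \<le> coeff G k)"

definition coeff_nonneg :: "real poly \<Rightarrow> bool" where
  "coeff_nonneg F \<longleftrightarrow> (\<forall>k. 0 \<le> coeff F k)"

lemma coeff_dominated_imp_nonneg: "coeff_dominated g G \<Longrightarrow> coeff_nonneg G"
  unfolding coeff_dominated_def coeff_nonneg_def by (meson norm_ge_zero order_trans)

lemma coeff_dominated_0: "coeff_dominated 0 0"
  by (simp add: coeff_dominated_def)

lemma coeff_dominated_1: "coeff_dominated 1 1"
  by (simp add: coeff_dominated_def coeff_1)

lemma coeff_dominated_const: "coeff_dominated [:c:] [:norm c:]"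
  by (simp add: coeff_dominated_def coeff_pCons split: nat.split)

lemma coeff_dominated_linear: "coeff_dominated [:c, 1:] [:norm c, 1:]"
  by (simp add: coeff_dominated_def coeff_pCons split: nat.split)

lemma coeff_dominated_add:
  "coeff_dominated f F \<Longrightarrow> coeff_dominated g G \<Longrightarrow> coeff_dominated (f + g) (F + G)"
  unfolding coeff_dominated_def by (simp add: add_mono norm_triangle_le)

lemma coeff_dominated_diff:
  "coeff_dominated f F \<Longrightarrow> coeff_dominated g G \<Longrightarrow> coeff_dominated (f - g) (F + G)"
  unfolding coeff_dominated_def by (simp add: add_mono norm_triangle_le_diff)

lemma coeff_dominated_smult:
  "coeff_dominated f F \<Longrightarrow> coeff_dominated (smult c f) (smult (norm c) F)"
  unfolding coeff_dominated_def by (simp add: norm_mult mult_left_mono)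

lemma coeff_dominated_mult:
  assumes "coeff_dominated f F" "coeff_dominated g G"
  shows "coeff_dominated (f * g) (F * G)"
  unfolding coeff_dominated_def
proof
  fix k
  have "norm (coeff (f * g) k) \<le> (\<Sum>i\<le>k. norm (coeff f i) * norm (coeff g (k - i)))"
    unfolding coeff_mult by (rule order_trans[OF norm_sum sum_mono]) (simp add: norm_mult)
  also have "\<dots> \<le> (\<Sum>i\<le>k. coeff F i * coeff G (k - i))"
    using assms unfolding coeff_dominated_def
    by (intro sum_mono mult_mono) (auto intro: order_trans[OF norm_ge_zero])
  finally show "norm (coeff (f * g) k) \<le> coeff (F * G) k"
    unfolding coeff_mult .
qed

lemma coeff_dominated_sum:
  "(\<And>i. i \<in> A \<Longrightarrow> coeff_dominated (f i) (F i)) \<Longrightarrow> coeff_dominated (\<Sum>i\<in>A. f i) (\<Sum>i\<in>A. F i)"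
  by (induction A rule: infinite_finite_induct) (auto intro: coeff_dominated_0 coeff_dominated_add)

lemma coeff_dominated_prod:
  "(\<And>i. i \<in> A \<Longrightarrow> coeff_dominated (f i) (F i)) \<Longrightarrow> coeff_dominated (\<Prod>i\<in>A. f i) (\<Prod>i\<in>A. F i)"
  by (induction A rule: infinite_finite_induct) (auto intro: coeff_dominated_1 coeff_dominated_mult)

lemma coeff_dominated_coeff_le: "coeff_dominated f F \<Longrightarrow> coeff_le F G \<Longrightarrow> coeff_dominated f G"
  unfolding coeff_dominated_def coeff_le_def by (meson order_trans)

lemma coeff_le_refl: "coeff_le F F"
  by (simp add: coeff_le_def)

lemma coeff_le_smult_left: "coeff_nonneg F \<Longrightarrow> c \<le> d \<Longrightarrow> coeff_le (smult c F) (smult d F)"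
  unfolding coeff_le_def coeff_nonneg_def by (simp add: mult_right_mono)

lemma coeff_nonneg_mult: "coeff_nonneg F \<Longrightarrow> coeff_nonneg G \<Longrightarrow> coeff_nonneg (F * G)"
  unfolding coeff_nonneg_def coeff_mult by (simp add: sum_nonneg)

lemma coeff_nonneg_prod: "(\<And>i. i \<in> A \<Longrightarrow> coeff_nonneg (F i)) \<Longrightarrow> coeff_nonneg (\<Prod>i\<in>A. F i)"
  by (induction A rule: infinite_finite_induct)
    (auto intro: coeff_nonneg_mult coeff_dominated_imp_nonneg[OF coeff_dominated_1])

lemma coeff_le_mult:
  "coeff_nonneg F \<Longrightarrow> coeff_nonneg G \<Longrightarrow> coeff_le F F' \<Longrightarrow> coeff_le G G' \<Longrightarrow> coeff_le (F * G) (F' * G')"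
  unfolding coeff_le_def coeff_nonneg_def coeff_mult
  by (intro allI sum_mono mult_mono) (auto intro: order_trans)

lemma coeff_le_prod:
  assumes "\<And>i. i \<in> A \<Longrightarrow> coeff_nonneg (F i)" "\<And>i. i \<in> A \<Longrightarrow> coeff_le (F i) (G i)"
  shows "coeff_le (\<Prod>i\<in>A. F i) (\<Prod>i\<in>A. G i)"
  using assms
proof (induction A rule: infinite_finite_induct)
  case (insert x A)
  then show ?case by (simp add: coeff_le_mult coeff_nonneg_prod)
qed (simp_all add: coeff_le_refl)

lemma coeff_dominated_prod_add_diff:
  assumes "\<And>i. i \<in> I \<Longrightarrow> coeff_dominated (u i) (U i)" "\<And>i. i \<in> I \<Longrightarrow> coeff_dominated (v i) (V i)"
  shows "coeff_dominated ((\<Prod>i\<in>I. u i + v i) - (\<Prod>i\<in>I. u i)) ((\<Prod>i\<in>I. U i + V i) - (\<Prod>i\<in>I. U i))"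
  using assms
proof (induction I rule: infinite_finite_induct)
  case (insert x I)
  let ?X = "\<Prod>i\<in>I. u i + v i" and ?Y = "\<Prod>i\<in>I. u i"
  let ?X' = "\<Prod>i\<in>I. U i + V i" and ?Y' = "\<Prod>i\<in>I. U i"
  have "coeff_dominated ((u x + v x) * (?X - ?Y) + v x * ?Y) ((U x + V x) * (?X' - ?Y') + V x * ?Y')"
    using insert by (intro coeff_dominated_add coeff_dominated_mult coeff_dominated_prod) auto
  then show ?case
    using insert.hyps by (simp add: algebra_simps)
qed (simp_all add: coeff_dominated_0)

lemma degree_le_if_coeff_dominated: "coeff_dominated g G \<Longrightarrow> degree g \<le> degree G"
  unfolding coeff_dominated_def by (metis coeff_eq_0 degree_le leI norm_le_zero_iff)

lemma norm_poly_le_if_coeff_dominated: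
  assumes "coeff_dominated g G"
  shows "norm (poly g z) \<le> poly G (norm z)"
proof -
  have "poly g z = (\<Sum>i\<le>degree G. coeff g i * z ^ i)"
    unfolding poly_altdef using degree_le_if_coeff_dominated[OF assms]
    by (intro sum.mono_neutral_left) (auto simp: coeff_eq_0)
  then have "norm (poly g z) \<le> (\<Sum>i\<le>degree G. norm (coeff g i) * norm z ^ i)"
    by (simp add: norm_sum norm_mult norm_power order_trans[OF norm_sum])
  also have "\<dots> \<le> (\<Sum>i\<le>degree G. coeff G i * norm z ^ i)"
    using assms unfolding coeff_dominated_def by (intro sum_mono mult_right_mono) auto
  also have "\<dots> = poly G (norm z)"
    by (simp add: poly_altdef)
  finally show ?thesis .
qed

section \<open>Polynomials with prescribed roots\<close>

definition poly_of_roots :: "('i \<Rightarrow> 'a::idom) \<Rightarrow> 'i set \<Rightarrow> 'a poly" where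
  "poly_of_roots a I = (\<Prod>i\<in>I. [:- a i, 1:])"

definition poly_of_root_norms :: "('i \<Rightarrow> 'a::real_normed_field) \<Rightarrow> 'i set \<Rightarrow> real poly" where
  "poly_of_root_norms a I = (\<Prod>i\<in>I. [:norm (a i), 1:])"

lemma poly_poly_of_roots: "poly (poly_of_roots a I) z = (\<Prod>i\<in>I. z - a i)"
  by (simp add: poly_of_roots_def poly_prod)

lemma poly_poly_of_root_norms: "poly (poly_of_root_norms a I) r = (\<Prod>i\<in>I. r + norm (a i))"
  by (simp add: poly_of_root_norms_def poly_prod add.commute)

lemma coeff_dominated_poly_of_roots: "coeff_dominated (poly_of_roots a I) (poly_of_root_norms a I)"
  unfolding poly_of_roots_def poly_of_root_norms_def
  using coeff_dominated_linear[of "- a i" for i] by (intro coeff_dominated_prod) simp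

lemma coeff_nonneg_poly_of_root_norms: "coeff_nonneg (poly_of_root_norms a I)"
  by (rule coeff_dominated_imp_nonneg[OF coeff_dominated_poly_of_roots])

lemma degree_poly_of_roots: "finite I \<Longrightarrow> degree (poly_of_roots a I) = card I"
  by (simp add: poly_of_roots_def degree_prod_eq_sum_degree)

lemma lead_coeff_poly_of_roots: "lead_coeff (poly_of_roots a I) = 1"
  by (simp add: poly_of_roots_def lead_coeff_prod)

lemma poly_of_roots_remove:
  "finite I \<Longrightarrow> j \<in> I \<Longrightarrow> poly_of_roots a I = [:- a j, 1:] * poly_of_roots a (I - {j})"
  unfolding poly_of_roots_def by (simp add: prod.remove)

lemma poly_of_root_norms_remove:
  "finite I \<Longrightarrow> j \<in> I \<Longrightarrow> poly_of_root_norms a I = [:norm (a j), 1:] * poly_of_root_norms a (I - {j})"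
  unfolding poly_of_root_norms_def by (simp add: prod.remove)

lemma poly_of_roots_permute: "\<sigma> permutes I \<Longrightarrow> poly_of_roots (b \<circ> \<sigma>) I = poly_of_roots b I"
  unfolding poly_of_roots_def using prod.permute[of \<sigma> I "\<lambda>i. [:- b i, 1:]"] by (simp add: comp_def)

lemma coeff_linear_mult:
  fixes c :: "'a::comm_semiring_1"
  shows "coeff ([:c, 1:] * p) i = c * coeff p i + coeff (pCons 0 p) i"
  by (simp add: mult_pCons_left smult_1_left)

lemma coeff_linear_mult_le:
  fixes H :: "real poly"
  assumes H: "coeff_nonneg H" "degree H \<le> d"
    and bound: "\<And>i k. i \<le> k \<Longrightarrow> k \<le> d \<Longrightarrow> coeff H i \<le> 2^d * A^(k-i) * coeff H k"
    and t: "0 \<le> t" "t \<le> A" and ik: "i \<le> k" "k \<le> Suc d"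
  shows "coeff ([:t, 1:] * H) i \<le> 2^Suc d * A^(k-i) * coeff ([:t, 1:] * H) k"
proof -
  let ?S = "coeff (pCons 0 H)"
  have H0: "0 \<le> coeff H j" for j
    using H(1) by (simp add: coeff_nonneg_def)
  have S0: "0 \<le> ?S j" for j
    using H0 by (cases j) auto
  have A0: "0 \<le> A"
    using t by linarith
  have shift: "?S i \<le> 2^d * A^(k-i) * ?S k"
  proof (cases i)
    case 0
    then show ?thesis using S0 A0 by simp
  next
    case (Suc i')
    then obtain k' where "k = Suc k'" using ik by (cases k) auto
    then show ?thesis using bound[of i' k'] ik Suc by simp
  qed
  have tH: "t * coeff H i \<le> 2^d * A^(k-i) * coeff ([:t, 1:] * H) k"
  proof (cases "k \<le> d")
    case True
    have "t * coeff H i \<le> t * (2^d * A^(k-i) * coeff H k)"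
      using bound[OF ik(1) True] t by (simp add: mult_left_mono)
    also have "\<dots> \<le> 2^d * A^(k-i) * coeff ([:t, 1:] * H) k"
      using t A0 S0[of k] by (simp add: coeff_linear_mult algebra_simps)
    finally show ?thesis .
  next
    case False
    then have k: "k = Suc d" using ik by simp
    show ?thesis
    proof (cases "i \<le> d")
      case True
      have "t * coeff H i \<le> A * (2^d * A^(d-i) * coeff H d)"
        using bound[OF True order_refl] t H0 A0 by (intro mult_mono) auto
      also have "\<dots> = 2^d * A^(k-i) * coeff ([:t, 1:] * H) k"
        using True k H(2) by (simp add: coeff_linear_mult coeff_eq_0 Suc_diff_le algebra_simps)
      finally show ?thesis .
    next
      case False
      then show ?thesis using k ik H(2) A0 S0 H0 by (simp add: coeff_eq_0 coeff_linear_mult)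
    qed
  qed
  have "?S k \<le> coeff ([:t, 1:] * H) k"
    using t H0 by (simp add: coeff_linear_mult)
  then have "?S i \<le> 2^d * A^(k-i) * coeff ([:t, 1:] * H) k"
    using shift A0 by (meson order_trans mult_left_mono zero_le_mult_iff zero_le_numeral zero_le_power)
  with tH show ?thesis
    by (simp add: coeff_linear_mult)
qed

lemma coeff_prod_linear_le:
  fixes t :: "'i \<Rightarrow> real"
  assumes "finite J" "\<And>j. j \<in> J \<Longrightarrow> 0 \<le> t j \<and> t j \<le> A" "i \<le> k" "k \<le> card J"
  shows "coeff (\<Prod>j\<in>J. [:t j, 1:]) i \<le> 2 ^ card J * A ^ (k - i) * coeff (\<Prod>j\<in>J. [:t j, 1:]) k"
  using assms
proof (induction J arbitrary: i k rule: finite_induct)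
  case (insert x J)
  have "coeff_nonneg (\<Prod>j\<in>J. [:t j, 1:])"
    using insert.prems by (intro coeff_nonneg_prod) (simp add: coeff_nonneg_def coeff_pCons split: nat.split)
  moreover have "degree (\<Prod>j\<in>J. [:t j, 1:]) \<le> card J"
    using degree_prod_sum_le[OF insert.hyps(1), of "\<lambda>j. [:t j, 1:]"] by simp
  ultimately show ?case
    unfolding prod.insert[OF insert.hyps] card_insert_disjoint[OF insert.hyps]
    by (rule coeff_linear_mult_le) (use insert in auto)
qed simp

section \<open>Matching the roots of nearby polynomials\<close>

(* Solve (x - beta) R = S from the bottom: beta R_i = R_(i-1) - S_i, and |beta| >= A/2 costs
   at most a factor 2/A per coefficient. *)
lemma norm_coeff_deflation_le:
  fixes R S :: "'a::real_normed_field poly"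
  assumes RS: "[:-\<beta>, 1:] * R = S" and A: "0 < A" "A / 2 \<le> norm \<beta>"
    and S: "\<And>i. i \<le> k \<Longrightarrow> norm (coeff S i) \<le> X * A ^ (k - i + 1)"
  shows "i \<le> k \<Longrightarrow> norm (coeff R i) \<le> X * A ^ (k - i) * (2 ^ (i + 2) - 2)"
proof -
  have step: "A * norm (coeff R j) \<le> 2 * (norm (coeff (pCons 0 R) j) + norm (coeff S j))" for j
  proof -
    have "\<beta> * coeff R j = coeff (pCons 0 R) j - coeff S j"
      using RS coeff_linear_mult[of "-\<beta>" R j] by simp
    then have "norm \<beta> * norm (coeff R j) \<le> norm (coeff (pCons 0 R) j) + norm (coeff S j)"
      by (metis norm_mult norm_triangle_ineq4)
    moreover have "A / 2 * norm (coeff R j) \<le> norm \<beta> * norm (coeff R j)"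
      using A by (intro mult_right_mono) auto
    ultimately show ?thesis by simp
  qed
  show "i \<le> k \<Longrightarrow> norm (coeff R i) \<le> X * A ^ (k - i) * (2 ^ (i + 2) - 2)"
  proof (induction i)
    case 0
    have "A * norm (coeff R 0) \<le> A * (X * A ^ k * 2)"
      using step[of 0] S[of 0] by (simp add: algebra_simps)
    then show ?case using A by simp
  next
    case (Suc j)
    have "k - j = k - Suc j + 1" using Suc.prems by simp
    then have "A * norm (coeff R (Suc j))
        \<le> 2 * (X * A ^ (k - Suc j + 1) * (2 ^ (j + 2) - 2) + X * A ^ (k - Suc j + 1))"
      using step[of "Suc j"] S[OF Suc.prems] Suc by simp
    also have "\<dots> = A * (X * A ^ (k - Suc j) * (2 ^ (Suc j + 2) - 2))"
      by (simp add: algebra_simps)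
    finally show ?case using A by simp
  qed
qed

lemma coeff_dominated_deflation:
  fixes R S :: "'a::real_normed_field poly" and G :: "real poly"
  assumes RS: "[:-\<beta>, 1:] * R = S"
    and S: "coeff_dominated S (smult c ([:A, 1:] * G))"
    and A: "0 < A" "A / 2 \<le> norm \<beta>"
    and G: "coeff_nonneg G" "\<And>i k. i \<le> k \<Longrightarrow> k \<le> d \<Longrightarrow> coeff G i \<le> 2^d * A^(k-i) * coeff G k"
    and R: "degree R \<le> d" and c: "0 \<le> c"
  shows "coeff_dominated R (smult (c * 2^(2*d+3)) G)"
  unfolding coeff_dominated_def
proof
  fix k
  have G0: "0 \<le> coeff G i" for i
    using G(1) by (simp add: coeff_nonneg_def)
  show "norm (coeff R k) \<le> coeff (smult (c * 2 ^ (2 * d + 3)) G) k"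
  proof (cases "k \<le> d")
    case False
    then show ?thesis using R G0 c by (simp add: coeff_eq_0)
  next
    case kd: True
    define X where "X = c * 2^(d+1) * coeff G k"
    have X0: "0 \<le> X" using c G0 by (simp add: X_def)
    have "norm (coeff S i) \<le> X * A ^ (k - i + 1)" if ik: "i \<le> k" for i
    proof -
      have shift: "coeff (pCons 0 G) i \<le> 2^d * A^(k-i+1) * coeff G k"
      proof (cases i)
        case 0 then show ?thesis using G0 A by simp
      next
        case (Suc j)
        then have "k - j = k - i + 1" using ik by simp
        then show ?thesis using G(2)[of j k] Suc ik kd by simp
      qed
      have "A * coeff G i \<le> A * (2^d * A^(k-i) * coeff G k)"
        using G(2) ik kd A by (intro mult_left_mono) auto
      with shift have "A * coeff G i + coeff (pCons 0 G) i \<le> 2 * (2^d * A^(k-i+1) * coeff G k)"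
        by (simp add: algebra_simps)
      then have "c * (A * coeff G i + coeff (pCons 0 G) i) \<le> X * A ^ (k - i + 1)"
        using c by (auto simp: X_def algebra_simps dest: mult_left_mono[where c = c])
      moreover have "norm (coeff S i) \<le> c * (A * coeff G i + coeff (pCons 0 G) i)"
        using S unfolding coeff_dominated_def by (metis coeff_linear_mult coeff_smult)
      ultimately show ?thesis by linarith
    qed
    then have "norm (coeff R k) \<le> X * (2 ^ (k + 2) - 2)"
      using norm_coeff_deflation_le[OF RS A, of k X k] by simp
    also have "\<dots> \<le> X * 2 ^ (d + 2)"
    proof (intro mult_left_mono X0)
      show "(2::real) ^ (k + 2) - 2 \<le> 2 ^ (d + 2)"
        using power_increasing[of "k + 2" "d + 2" "2::real"] kd by linarith
    qed
    also have "\<dots> = coeff (smult (c * 2 ^ (2 * d + 3)) G) k"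
      by (simp add: X_def power_add power_mult power2_eq_square algebra_simps)
    finally show ?thesis .
  qed
qed

lemma roots_zero_if_coeff_dominated:
  fixes a b :: "'i \<Rightarrow> 'a::real_normed_field"
  assumes I: "finite I" "j \<in> I" and a: "\<And>i. i \<in> I \<Longrightarrow> a i = 0" and "\<eta> < 1"
    and dom: "coeff_dominated (poly_of_roots b I - poly_of_roots a I) (smult \<eta> (poly_of_root_norms a I))"
  shows "b j = 0"
proof -
  have "poly (poly_of_roots b I) (b j) = 0"
    using I by (auto simp: poly_poly_of_roots intro: prod_zero)
  moreover have "poly (poly_of_roots a I) z = z ^ card I" for z
    using a by (simp add: poly_poly_of_roots)
  moreover have "poly (poly_of_root_norms a I) r = r ^ card I" for r
    using a by (simp add: poly_poly_of_root_norms)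
  ultimately have "norm (b j) ^ card I \<le> \<eta> * norm (b j) ^ card I"
    using norm_poly_le_if_coeff_dominated[OF dom, of "b j"] by (simp add: norm_power)
  with \<open>\<eta> < 1\<close> have "norm (b j) ^ card I \<le> 0"
    using mult_le_cancel_right1[of "norm (b j) ^ card I" \<eta>] by (simp add: not_le)
  then show ?thesis
    by (metis norm_eq_zero norm_ge_zero power_eq_0_iff zero_le_power order_antisym)
qed

lemma exists_close_root:
  fixes a b :: "'i \<Rightarrow> 'a::real_normed_field"
  assumes I: "finite I" "j0 \<in> I" and a: "\<And>i. i \<in> I \<Longrightarrow> norm (a i) \<le> norm (a j0)"
    and dom: "coeff_dominated (poly_of_roots b I - poly_of_roots a I)
                (smult (\<theta> ^ (card I * q)) (poly_of_root_norms a I))"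
    and "0 \<le> \<theta>"
  obtains l where "l \<in> I" "norm (a j0 - b l) \<le> 2 * \<theta> ^ q * norm (a j0)"
proof -
  define A where "A = norm (a j0)"
  have A0: "0 \<le> A" by (simp add: A_def)
  have "poly (poly_of_roots a I) (a j0) = 0"
    using I by (auto simp: poly_poly_of_roots intro: prod_zero)
  then have "(\<Prod>i\<in>I. norm (a j0 - b i)) \<le> \<theta> ^ (card I * q) * (\<Prod>i\<in>I. A + norm (a i))"
    using norm_poly_le_if_coeff_dominated[OF dom, of "a j0"]
    by (simp add: poly_poly_of_roots poly_poly_of_root_norms prod_norm A_def)
  also have "\<dots> \<le> \<theta> ^ (card I * q) * (\<Prod>i\<in>I. 2 * A)"
    using a \<open>0 \<le> \<theta>\<close> by (intro mult_left_mono prod_mono) (auto simp: A_def)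
  also have "\<dots> = (2 * \<theta> ^ q * A) ^ card I"
    by (simp add: power_mult power_mult_distrib mult.commute)
  finally have prod_le: "(\<Prod>i\<in>I. norm (a j0 - b i)) \<le> (2 * \<theta> ^ q * A) ^ card I" .
  have "I \<noteq> {}" using I by blast
  define l where "l = arg_min_on (\<lambda>i. norm (a j0 - b i)) I"
  have l: "l \<in> I" "\<And>i. i \<in> I \<Longrightarrow> norm (a j0 - b l) \<le> norm (a j0 - b i)"
    unfolding l_def using I(1) \<open>I \<noteq> {}\<close> by (auto intro: arg_min_if_finite(1) arg_min_least)
  have "norm (a j0 - b l) ^ card I \<le> (\<Prod>i\<in>I. norm (a j0 - b i))"
    using l by (simp flip: prod_constant add: prod_mono)
  with prod_le have "norm (a j0 - b l) ^ card I \<le> (2 * \<theta> ^ q * A) ^ card I"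
    by linarith
  then have "norm (a j0 - b l) \<le> 2 * \<theta> ^ q * A"
    using \<open>I \<noteq> {}\<close> I(1) A0 \<open>0 \<le> \<theta>\<close>
    by (metis card_0_eq not0_implies_Suc power_le_imp_le_base zero_le_mult_iff zero_le_numeral zero_le_power)
  with l(1) show ?thesis using that by (simp add: A_def)
qed

lemma coeff_dominated_diff_const_mult:
  fixes D g :: "'a::real_normed_field poly"
  assumes D: "coeff_dominated D (smult \<eta> ([:A, 1:] * G))" and g: "coeff_dominated g G"
    and c: "norm c \<le> 2 * \<eta>' * A" and "\<eta> \<le> \<eta>'" "0 \<le> \<eta>'" "0 \<le> A"
  shows "coeff_dominated (D - [:c:] * g) (smult (3 * \<eta>') ([:A, 1:] * G))"
proof (rule coeff_dominated_coeff_le)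
  show "coeff_dominated (D - [:c:] * g) (smult \<eta> ([:A, 1:] * G) + [:norm c:] * G)"
    by (intro coeff_dominated_diff D coeff_dominated_mult coeff_dominated_const g)
  show "coeff_le (smult \<eta> ([:A, 1:] * G) + [:norm c:] * G) (smult (3 * \<eta>') ([:A, 1:] * G))"
    unfolding coeff_le_def
  proof
    fix k
    have G0: "0 \<le> coeff G k" "0 \<le> coeff (pCons 0 G) k"
      using coeff_dominated_imp_nonneg[OF g] by (auto simp: coeff_nonneg_def coeff_pCons split: nat.split)
    have "norm c * coeff G k \<le> 2 * \<eta>' * (A * coeff G k)"
      using mult_right_mono[OF c G0(1)] by (simp add: algebra_simps)
    also have "\<dots> \<le> 2 * \<eta>' * (A * coeff G k + coeff (pCons 0 G) k)"
      using G0 \<open>0 \<le> \<eta>'\<close> by (intro mult_left_mono) auto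
    finally have "norm c * coeff G k \<le> \<dots>" .
    moreover have "\<eta> * (A * coeff G k + coeff (pCons 0 G) k) \<le> \<eta>' * (A * coeff G k + coeff (pCons 0 G) k)"
      using \<open>\<eta> \<le> \<eta>'\<close> G0 \<open>0 \<le> A\<close> by (intro mult_right_mono) auto
    ultimately show "coeff (smult \<eta> ([:A, 1:] * G) + [:norm c:] * G) k \<le> coeff (smult (3 * \<eta>') ([:A, 1:] * G)) k"
      by (simp add: coeff_linear_mult algebra_simps)
  qed
qed

lemma coeff_dominated_deflate_roots:
  fixes a b :: "'i \<Rightarrow> 'a::real_normed_field" and I :: "'i set" and j0 :: 'i
  defines "I' \<equiv> I - {j0}"
  assumes I: "finite I" "j0 \<in> I" "card I = Suc m"
    and a: "\<And>i. i \<in> I \<Longrightarrow> norm (a i) \<le> norm (a j0)" "a j0 \<noteq> 0"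
    and dom: "coeff_dominated (poly_of_roots b I - poly_of_roots a I)
                (smult (\<theta> ^ (Suc m * (p + 1))) (poly_of_root_norms a I))"
    and close: "norm (a j0 - b j0) \<le> 2 * \<theta> ^ (p + 1) * norm (a j0)"
    and \<theta>: "0 \<le> \<theta>" "\<theta> * (3 * 2^(2*m+3)) \<le> 1"
  shows "coeff_dominated (poly_of_roots b I' - poly_of_roots a I') (smult (\<theta> ^ p) (poly_of_root_norms a I'))"
proof -
  define A where "A = norm (a j0)"
  define G where "G = poly_of_root_norms a I'"
  define R where "R = poly_of_roots b I' - poly_of_roots a I'"
  have A: "0 < A" using a(2) by (simp add: A_def)
  have "\<theta> * 24 \<le> \<theta> * (3 * 2^(2*m+3))"
    using power_increasing[of 3 "2*m+3" "2::real"] \<theta>(1) by (intro mult_left_mono) auto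
  then have "\<theta> \<le> 1 / 24" using \<theta>(2) by linarith
  then have \<theta>_pow: "\<theta> ^ (Suc m * (p + 1)) \<le> \<theta> ^ (p + 1)" "\<theta> ^ (p + 1) \<le> 1 / 24"
    using \<theta>(1) power_decreasing[of 1 "p + 1" \<theta>] power_decreasing[of "p + 1" "Suc m * (p + 1)" \<theta>]
    by simp_all
  have RS: "[:- b j0, 1:] * R = (poly_of_roots b I - poly_of_roots a I) - [:a j0 - b j0:] * poly_of_roots a I'"
    unfolding R_def poly_of_roots_remove[OF I(1,2), of a] poly_of_roots_remove[OF I(1,2), of b] I'_def
    by (simp add: algebra_simps flip: smult_add_left)
  have S: "coeff_dominated ((poly_of_roots b I - poly_of_roots a I) - [:a j0 - b j0:] * poly_of_roots a I')
      (smult (3 * \<theta> ^ (p + 1)) ([:A, 1:] * G))"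
    unfolding G_def A_def using \<theta>(1)
    by (intro coeff_dominated_diff_const_mult[OF dom[unfolded poly_of_root_norms_remove[OF I(1,2)], folded I'_def]]
        coeff_dominated_poly_of_roots close \<theta>_pow(1)) auto
  have "\<theta> ^ (p + 1) * A \<le> 1 / 24 * A"
    using \<theta>_pow A by (intro mult_right_mono) auto
  moreover have "norm (a j0 - b j0) \<le> 2 * (\<theta> ^ (p + 1) * A)"
    using close by (simp add: A_def mult.assoc)
  ultimately have "A / 2 \<le> norm (b j0)"
    using norm_triangle_ineq2[of "a j0" "b j0"] A unfolding A_def by linarith
  moreover have "card I' = m" "finite I'"
    using I by (simp_all add: I'_def)
  moreover have "\<And>i k. i \<le> k \<Longrightarrow> k \<le> m \<Longrightarrow> coeff G i \<le> 2^m * A^(k-i) * coeff G k"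
    using coeff_prod_linear_le[of I' "\<lambda>i. norm (a i)" A] a(1) \<open>card I' = m\<close> \<open>finite I'\<close>
    unfolding G_def poly_of_root_norms_def A_def I'_def by auto
  moreover have "degree R \<le> m"
    unfolding R_def using \<open>card I' = m\<close> \<open>finite I'\<close> by (intro degree_diff_le) (simp_all add: degree_poly_of_roots)
  ultimately have "coeff_dominated R (smult (3 * \<theta> ^ (p + 1) * 2^(2*m+3)) G)"
    using coeff_dominated_deflation[OF RS S A] \<theta>(1) by (simp add: G_def coeff_nonneg_poly_of_root_norms)
  moreover have "3 * \<theta> ^ (p + 1) * 2^(2*m+3) \<le> \<theta> ^ p"
    using mult_right_mono[OF \<theta>(2) zero_le_power[OF \<theta>(1), of p]] by (simp add: algebra_simps)
  ultimately show ?thesis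
    unfolding R_def G_def
    by (rule coeff_dominated_coeff_le[OF _ coeff_le_smult_left[OF coeff_nonneg_poly_of_root_norms]])
qed

lemma permutes_compose_match:
  assumes "\<tau> permutes I" "j0 \<in> I" "\<sigma> permutes (I - {j0})"
    and "P j0 (\<tau> j0)" "\<And>j. j \<in> I - {j0} \<Longrightarrow> P j (\<tau> (\<sigma> j))"
  shows "\<tau> \<circ> \<sigma> permutes I \<and> (\<forall>j\<in>I. P j ((\<tau> \<circ> \<sigma>) j))"
proof
  show "\<tau> \<circ> \<sigma> permutes I"
    using assms(1,3) by (intro permutes_compose permutes_subset[of \<sigma> "I - {j0}" I]) auto
  have "\<sigma> j0 = j0"
    using assms(3) by (rule permutes_not_in) simp
  show "\<forall>j\<in>I. P j ((\<tau> \<circ> \<sigma>) j)"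
  proof
    fix j assume "j \<in> I"
    then show "P j ((\<tau> \<circ> \<sigma>) j)"
      using assms(4) assms(5)[of j] \<open>\<sigma> j0 = j0\<close> by (cases "j = j0") auto
  qed
qed

lemma roots_match_step:
  fixes a b :: "'i \<Rightarrow> 'a::real_normed_field"
  assumes IH: "\<And>(I::'i set) (a::'i \<Rightarrow> 'a) b \<theta>. finite I \<Longrightarrow> card I = m \<Longrightarrow> 0 \<le> \<theta> \<Longrightarrow> \<theta> \<le> \<theta>0 \<Longrightarrow>
        coeff_dominated (poly_of_roots b I - poly_of_roots a I) (smult (\<theta> ^ p) (poly_of_root_norms a I)) \<Longrightarrow>
        \<exists>\<sigma>. \<sigma> permutes I \<and> (\<forall>j\<in>I. norm (b (\<sigma> j) - a j) \<le> K * \<theta> * norm (a j))"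
    and I: "finite I" "card I = Suc m"
    and \<theta>: "0 \<le> \<theta>" "\<theta> \<le> \<theta>0" "\<theta> * (3 * 2^(2*m+3)) \<le> 1"
    and dom: "coeff_dominated (poly_of_roots b I - poly_of_roots a I)
                (smult (\<theta> ^ (Suc m * (p + 1))) (poly_of_root_norms a I))"
  shows "\<exists>\<sigma>. \<sigma> permutes I \<and> (\<forall>j\<in>I. norm (b (\<sigma> j) - a j) \<le> max K 2 * \<theta> * norm (a j))"
proof -
  have "I \<noteq> {}" using I by auto
  then obtain j0 where j0: "j0 \<in> I" "Max ((\<lambda>i. norm (a i)) ` I) = norm (a j0)"
    by (rule obtains_MAX[OF I(1)])
  have a_le: "norm (a i) \<le> norm (a j0)" if "i \<in> I" for i
    using Max_ge[of "(\<lambda>i. norm (a i)) ` I" "norm (a i)"] I(1) that j0(2) by simp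
  have "\<theta> * 3 \<le> \<theta> * (3 * 2^(2*m+3))"
    using \<theta>(1) by (intro mult_left_mono) auto
  then have "\<theta> < 1" using \<theta>(3) by linarith
  show ?thesis
  proof (cases "a j0 = 0")
    case True
    then have a0: "a i = 0" if "i \<in> I" for i
      using a_le[OF that] by simp
    moreover have "\<theta> ^ (Suc m * (p + 1)) < 1"
      using power_decreasing[of 1 "Suc m * (p + 1)" \<theta>] \<open>\<theta> < 1\<close> \<theta>(1) by simp
    ultimately have "b j = 0" if "j \<in> I" for j
      using roots_zero_if_coeff_dominated[OF I(1) that _ _ dom] by blast
    with a0 show ?thesis
      by (intro exI[of _ id]) (simp add: permutes_id)
  next
    case False
    obtain l where l: "l \<in> I" "norm (a j0 - b l) \<le> 2 * \<theta> ^ (p + 1) * norm (a j0)"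
      using exists_close_root[OF I(1) j0(1), of a b \<theta> "p + 1"] a_le dom \<theta>(1) I(2) by auto
    define \<tau> where "\<tau> = Transposition.transpose l j0"
    have \<tau>: "\<tau> permutes I" "\<tau> j0 = l"
      unfolding \<tau>_def using l j0 by (auto intro: permutes_swap_id)
    have "coeff_dominated (poly_of_roots (b \<circ> \<tau>) I - poly_of_roots a I)
        (smult (\<theta> ^ (Suc m * (p + 1))) (poly_of_root_norms a I))"
      using dom by (simp only: poly_of_roots_permute[OF \<tau>(1)])
    then have "coeff_dominated (poly_of_roots (b \<circ> \<tau>) (I - {j0}) - poly_of_roots a (I - {j0}))
        (smult (\<theta> ^ p) (poly_of_root_norms a (I - {j0})))"
      using l(2) a_le False \<theta>(1,3) \<tau>(2) by (intro coeff_dominated_deflate_roots[OF I(1) j0(1) I(2)]) simp_all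
    then obtain \<sigma> where \<sigma>: "\<sigma> permutes (I - {j0})"
      "\<And>j. j \<in> I - {j0} \<Longrightarrow> norm (b (\<tau> (\<sigma> j)) - a j) \<le> K * \<theta> * norm (a j)"
      using IH[where I = "I - {j0}" and b = "b \<circ> \<tau>" and \<theta> = \<theta> and a = a] I j0(1) \<theta>(1,2) by auto
    have "\<theta> ^ (p + 1) \<le> \<theta>"
      using power_decreasing[of 1 "p + 1" \<theta>] \<open>\<theta> < 1\<close> \<theta>(1) by simp
    then have "2 * \<theta> ^ (p + 1) \<le> max K 2 * \<theta>"
      using mult_right_mono[of 2 "max K 2" \<theta>] \<theta>(1) by linarith
    then have "norm (b (\<tau> j0) - a j0) \<le> max K 2 * \<theta> * norm (a j0)"
      using l(2) mult_right_mono[of _ _ "norm (a j0)"] \<tau>(2) by (fastforce simp: norm_minus_commute)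
    moreover have "norm (b (\<tau> (\<sigma> j)) - a j) \<le> max K 2 * \<theta> * norm (a j)" if "j \<in> I - {j0}" for j
      using \<sigma>(2)[OF that] mult_right_mono[of K "max K 2" "\<theta> * norm (a j)"] \<theta>(1)
      by (simp add: mult.assoc)
    ultimately show ?thesis
      using permutes_compose_match[OF \<tau>(1) j0(1) \<sigma>(1), where P = "\<lambda>j k. norm (b k - a j) \<le> max K 2 * \<theta> * norm (a j)"]
      by blast
  qed
qed

lemma roots_match:
  obtains p K \<theta>0 where "0 < \<theta>0" "0 \<le> K"
    "\<And>(I::'i set) (a::'i \<Rightarrow> 'a::real_normed_field) b \<theta>. finite I \<Longrightarrow> card I = m \<Longrightarrow> 0 \<le> \<theta> \<Longrightarrow> \<theta> \<le> \<theta>0 \<Longrightarrow>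
        coeff_dominated (poly_of_roots b I - poly_of_roots a I) (smult (\<theta> ^ p) (poly_of_root_norms a I)) \<Longrightarrow>
        \<exists>\<sigma>. \<sigma> permutes I \<and> (\<forall>j\<in>I. norm (b (\<sigma> j) - a j) \<le> K * \<theta> * norm (a j))"
proof (induction m arbitrary: thesis)
  case 0
  show ?case
    by (rule 0[of 1 0 0]) (auto intro: exI[of _ id] permutes_id)
next
  case (Suc m)
  obtain p K \<theta>0 where "0 < \<theta>0" "0 \<le> K" and IH:
    "\<And>(I::'i set) (a::'i \<Rightarrow> 'a) b \<theta>. finite I \<Longrightarrow> card I = m \<Longrightarrow> 0 \<le> \<theta> \<Longrightarrow> \<theta> \<le> \<theta>0 \<Longrightarrow>
        coeff_dominated (poly_of_roots b I - poly_of_roots a I) (smult (\<theta> ^ p) (poly_of_root_norms a I)) \<Longrightarrow>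
        \<exists>\<sigma>. \<sigma> permutes I \<and> (\<forall>j\<in>I. norm (b (\<sigma> j) - a j) \<le> K * \<theta> * norm (a j))"
    by (rule Suc.IH) (rule that)
  show ?case
  proof (rule Suc.prems[of "min \<theta>0 (1 / (3 * 2^(2*m+3)))" "max K 2" "Suc m * (p + 1)"])
    show "0 < min \<theta>0 (1 / (3 * 2 ^ (2 * m + 3)))" "0 \<le> max K 2"
      using \<open>0 < \<theta>0\<close> by auto
  qed (rule roots_match_step[OF IH]; auto simp: pos_le_divide_eq)
qed

section \<open>The characteristic polynomial\<close>

definition leibniz_factor :: "'a::comm_ring_1^'n^'n \<Rightarrow> ('n \<Rightarrow> 'n) \<Rightarrow> 'n \<Rightarrow> 'a poly" where
  "leibniz_factor A \<sigma> i = (if \<sigma> i = i then [:- A$i$i, 1:] else [:- A$i$\<sigma> i:])"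

definition charpoly :: "'a::comm_ring_1^'n::finite^'n \<Rightarrow> 'a poly" where
  "charpoly A = (\<Sum>\<sigma> | \<sigma> permutes (UNIV::'n set). smult (of_int (sign \<sigma>)) (\<Prod>i\<in>UNIV. leibniz_factor A \<sigma> i))"

lemma poly_charpoly: "poly (charpoly A) x = det (mat x - A)"
  unfolding charpoly_def det_def poly_sum poly_smult poly_prod
  by (intro sum.cong refl arg_cong2[where f="(*)"] prod.cong) (auto simp: leibniz_factor_def mat_def)

lemma charpoly_split_diagonal:
  "charpoly (A::'a::idom^'n::finite^'n) = poly_of_roots (\<lambda>i. A$i$i) UNIV +
     (\<Sum>\<sigma>\<in>{\<sigma>. \<sigma> permutes (UNIV::'n set)} - {id}. smult (of_int (sign \<sigma>)) (\<Prod>i\<in>UNIV. leibniz_factor A \<sigma> i))"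
proof -
  have "(\<Prod>i\<in>UNIV. leibniz_factor A id i) = poly_of_roots (\<lambda>i. A$i$i) UNIV"
    by (simp add: leibniz_factor_def poly_of_roots_def)
  then show ?thesis
    unfolding charpoly_def by (subst sum.remove[of _ id]) (auto simp: permutes_id)
qed

lemma degree_leibniz_term_less:
  fixes A :: "'a::comm_ring_1^'n::finite^'n"
  assumes "\<sigma> \<noteq> id"
  shows "degree (\<Prod>i\<in>UNIV. leibniz_factor A \<sigma> i) < CARD('n::finite)"
proof -
  obtain i0 where "\<sigma> i0 \<noteq> i0" using assms by (metis eq_id_iff)
  have "degree (\<Prod>i\<in>UNIV. leibniz_factor A \<sigma> i) \<le> (\<Sum>i\<in>UNIV. degree (leibniz_factor A \<sigma> i))"
    using degree_prod_sum_le[of UNIV "leibniz_factor A \<sigma>"] by (simp add: comp_def)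
  also have "\<dots> = (\<Sum>i\<in>UNIV. if \<sigma> i = i then 1 else 0 :: nat)"
    by (intro sum.cong) (auto simp: leibniz_factor_def)
  also have "\<dots> < (\<Sum>i\<in>(UNIV::'n set). 1)"
    using \<open>\<sigma> i0 \<noteq> i0\<close> by (intro sum_strict_mono_ex1) auto
  finally show ?thesis by simp
qed

lemma charpoly_monic:
  "degree (charpoly (A::'a::idom^'n::finite^'n)) = CARD('n) \<and> lead_coeff (charpoly A) = 1"
proof -
  define rest where "rest = (\<Sum>\<sigma>\<in>{\<sigma>. \<sigma> permutes (UNIV::'n set)} - {id}.
    smult (of_int (sign \<sigma>)) (\<Prod>i\<in>UNIV. leibniz_factor A \<sigma> i))"
  have rest: "coeff rest k = 0" if "CARD('n) \<le> k" for k
    unfolding rest_def coeff_sum coeff_smult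
  proof (intro sum.neutral ballI)
    fix \<sigma> assume "\<sigma> \<in> {\<sigma>. \<sigma> permutes (UNIV::'n set)} - {id}"
    then have "degree (\<Prod>i\<in>UNIV. leibniz_factor A \<sigma> i) < k"
      using degree_leibniz_term_less[of \<sigma> A] that by auto
    then show "of_int (sign \<sigma>) * coeff (\<Prod>i\<in>UNIV. leibniz_factor A \<sigma> i) k = 0"
      by (simp add: coeff_eq_0)
  qed
  have diag: "degree (poly_of_roots (\<lambda>i. A$i$i) UNIV) = CARD('n)"
    "coeff (poly_of_roots (\<lambda>i. A$i$i) UNIV) CARD('n) = 1"
    using lead_coeff_poly_of_roots degree_poly_of_roots[OF finite_class.finite_UNIV] by metis+
  have eq: "charpoly A = poly_of_roots (\<lambda>i. A$i$i) UNIV + rest"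
    unfolding rest_def by (rule charpoly_split_diagonal)
  have "coeff (charpoly A) (CARD('n)) = 1"
    using diag rest by (simp add: eq)
  moreover have "coeff (charpoly A) k = 0" if "CARD('n) < k" for k
    using diag rest that by (simp add: eq coeff_eq_0)
  ultimately show ?thesis
    by (metis degree_le le_degree le_antisym leI zero_neq_one)
qed

lemma charpoly_eq_poly_of_roots: "\<exists>b. charpoly (A::complex^'n::finite^'n) = poly_of_roots b (UNIV::'n set)"
proof -
  obtain root where root: "smult (lead_coeff (charpoly A)) (\<Prod>i<degree (charpoly A). [:- root i, 1:]) = charpoly A"
    using complex_poly_decompose' by blast
  obtain f where f: "bij_betw f (UNIV::'n set) {..<CARD('n)}"
    using ex_bij_betw_finite_nat[of "UNIV::'n set"] by (auto simp: atLeast0LessThan)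
  have "coeff (charpoly A) CARD('n) = 1"
    using charpoly_monic[of A] by metis
  then have "charpoly A = (\<Prod>i<CARD('n). [:- root i, 1:])"
    using root charpoly_monic[of A] by simp
  also have "\<dots> = poly_of_roots (root \<circ> f) UNIV"
    unfolding poly_of_roots_def using prod.reindex_bij_betw[OF f, of "\<lambda>i. [:- root i, 1:]"] by simp
  finally show ?thesis by blast
qed

lemma eigenvalues_enum_iff_charpoly:
  "eigenvalues_enum A lam \<longleftrightarrow> charpoly A = poly_of_roots lam (UNIV::'n::finite set)"
  unfolding eigenvalues_enum_def
  by (simp flip: poly_eq_poly_eq_iff add: fun_eq_iff poly_charpoly poly_poly_of_roots)

section \<open>Eigenvalues of \<open>D (I + B) D\<close>\<close>

lemma diag_mat_mult_mult_nth: "(diag_mat d ** B ** diag_mat d) $ i $ j = d i * B$i$j * d j"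
proof -
  have "(diag_mat d ** B) $ i $ k = d i * B$i$k" for k
    by (simp add: matrix_matrix_mult_def diag_mat_def if_distrib if_distribR cong: if_cong)
  then show ?thesis
    unfolding matrix_matrix_mult_def[of "diag_mat d ** B"]
    by (simp add: diag_mat_def if_distrib if_distribR cong: if_cong)
qed

lemma one_plus_power_minus_one_le: "0 \<le> (e::real) \<Longrightarrow> e \<le> 1 \<Longrightarrow> (1 + e) ^ n - 1 \<le> (2 ^ n - 1) * e"
proof (induction n)
  case (Suc n)
  have "(1 + e) ^ Suc n - 1 = (1 + e) * ((1 + e) ^ n - 1) + e"
    by (simp add: algebra_simps)
  also have "\<dots> \<le> 2 * ((2 ^ n - 1) * e) + e"
    using Suc by (intro add_mono mult_mono) auto
  also have "\<dots> = (2 ^ Suc n - 1) * e"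
    by (simp add: algebra_simps)
  finally show ?case .
qed simp

lemma coeff_dominated_diagonal_perturbation:
  fixes \<nu> :: "'n::finite \<Rightarrow> complex" and B :: "complex^'n^'n"
  assumes B: "\<And>i j. cmod (B$i$j) \<le> \<epsilon>"
  defines "A \<equiv> diag_mat \<nu> ** (mat 1 + B) ** diag_mat \<nu>"
  shows "coeff_dominated (poly_of_roots (\<lambda>i. A$i$i) UNIV - poly_of_roots (\<lambda>i. \<nu> i ^ 2) UNIV)
           (smult ((1 + \<epsilon>) ^ CARD('n) - 1) (poly_of_root_norms (\<lambda>i. \<nu> i ^ 2) UNIV))"
proof -
  define a where "a i = \<nu> i ^ 2" for i
  define U where "U i = [:cmod (a i), 1:]" for i
  have "0 \<le> \<epsilon>" using B by (meson norm_ge_zero order_trans)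
  have "A$i$i = a i + a i * B$i$i" for i
    by (simp add: A_def diag_mat_mult_mult_nth mat_def a_def power2_eq_square algebra_simps)
  then have "poly_of_roots (\<lambda>i. A$i$i) UNIV = (\<Prod>i\<in>UNIV. [:- a i, 1:] + [:- (a i * B$i$i):])"
    by (simp add: poly_of_roots_def)
  moreover have "coeff_dominated ((\<Prod>i\<in>UNIV. [:- a i, 1:] + [:- (a i * B$i$i):]) - (\<Prod>i\<in>UNIV. [:- a i, 1:]))
      ((\<Prod>i\<in>UNIV. U i + smult \<epsilon> (U i)) - (\<Prod>i\<in>UNIV. U i))"
  proof (rule coeff_dominated_prod_add_diff)
    show "coeff_dominated [:- a i, 1:] (U i)" for i
      using coeff_dominated_linear[of "- a i"] by (simp add: U_def)
    have "cmod (a i * B$i$i) \<le> cmod (a i) * \<epsilon>" for i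
      using B by (simp add: norm_mult mult_left_mono)
    then have "coeff_le [:cmod (- (a i * B$i$i)):] (smult \<epsilon> (U i))" for i
      using \<open>0 \<le> \<epsilon>\<close> by (auto simp: coeff_le_def U_def coeff_pCons mult.commute split: nat.split)
    then show "coeff_dominated [:- (a i * B$i$i):] (smult \<epsilon> (U i))" for i
      by (rule coeff_dominated_coeff_le[OF coeff_dominated_const])
  qed
  moreover have "(\<Prod>i\<in>UNIV. U i + smult \<epsilon> (U i)) = smult ((1 + \<epsilon>) ^ CARD('n)) (\<Prod>i\<in>UNIV. U i)"
  proof -
    have "(\<Prod>i\<in>UNIV. U i + smult \<epsilon> (U i)) = (\<Prod>i\<in>UNIV. smult (1 + \<epsilon>) (U i))"
      by (simp add: smult_add_left)
    then show ?thesis by (simp add: prod_smult)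
  qed
  ultimately show ?thesis
    by (simp add: a_def U_def poly_of_roots_def poly_of_root_norms_def smult_diff_left)
qed

lemma prod_if_fixed_le:
  fixes \<epsilon> :: real
  assumes "\<sigma> \<noteq> id" "0 \<le> \<epsilon>" "\<epsilon> \<le> 1"
  shows "(\<Prod>i\<in>(UNIV::'n::finite set). if \<sigma> i = i then 1 + \<epsilon> else \<epsilon>) \<le> 2 ^ CARD('n) * \<epsilon>"
proof -
  let ?c = "\<lambda>i. if \<sigma> i = i then 1 + \<epsilon> else \<epsilon>"
  obtain i0 where i0: "\<sigma> i0 \<noteq> i0" using assms(1) by (metis eq_id_iff)
  have "(\<Prod>i\<in>UNIV. ?c i) = ?c i0 * (\<Prod>i\<in>UNIV - {i0}. ?c i)"
    by (simp add: prod.remove)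
  also have "\<dots> \<le> \<epsilon> * (\<Prod>i\<in>UNIV - {i0}. 2)"
    using i0 assms(2,3) by (intro mult_mono prod_mono prod_nonneg) auto
  also have "\<dots> \<le> \<epsilon> * 2 ^ CARD('n)"
    using assms(2) by (intro mult_left_mono) (simp_all add: card_Diff_subset power_increasing)
  finally show ?thesis by (simp add: mult.commute)
qed

lemma coeff_dominated_leibniz_factor:
  fixes \<nu> :: "'n::finite \<Rightarrow> complex" and B :: "complex^'n^'n"
  assumes B: "\<And>i j. cmod (B$i$j) \<le> \<epsilon>"
  defines "A \<equiv> diag_mat \<nu> ** (mat 1 + B) ** diag_mat \<nu>"
  shows "coeff_dominated (leibniz_factor A \<sigma> i)
           (if \<sigma> i = i then smult (1 + \<epsilon>) [:cmod (\<nu> i) ^ 2, 1:] else [:\<epsilon> * (cmod (\<nu> i) * cmod (\<nu> (\<sigma> i))):])"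
proof -
  have "0 \<le> \<epsilon>" using B by (meson norm_ge_zero order_trans)
  have A: "A$i$j = \<nu> i * ((if i = j then 1 else 0) + B$i$j) * \<nu> j" for j
    by (simp add: A_def diag_mat_mult_mult_nth mat_def)
  show ?thesis
  proof (cases "\<sigma> i = i")
    case True
    have "cmod (A$i$i) = cmod (\<nu> i) ^ 2 * cmod (1 + B$i$i)"
      using A[of i] by (simp add: norm_mult power2_eq_square)
    also have "\<dots> \<le> cmod (\<nu> i) ^ 2 * (1 + \<epsilon>)"
      using B[of i i] norm_triangle_ineq[of 1 "B$i$i"] by (intro mult_left_mono) auto
    finally have "coeff_le [:cmod (- A$i$i), 1:] (smult (1 + \<epsilon>) [:cmod (\<nu> i) ^ 2, 1:])"
      using \<open>0 \<le> \<epsilon>\<close> by (auto simp: coeff_le_def coeff_pCons mult.commute split: nat.split)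
    then show ?thesis
      using True coeff_dominated_linear[of "- A$i$i"] by (simp add: leibniz_factor_def coeff_dominated_coeff_le)
  next
    case False
    have "cmod (A$i$\<sigma> i) = cmod (B$i$\<sigma> i) * (cmod (\<nu> i) * cmod (\<nu> (\<sigma> i)))"
      using A[of "\<sigma> i"] False by (simp add: norm_mult)
    also have "\<dots> \<le> \<epsilon> * (cmod (\<nu> i) * cmod (\<nu> (\<sigma> i)))"
      using B by (intro mult_right_mono) auto
    finally have "coeff_le [:cmod (- A$i$\<sigma> i):] [:\<epsilon> * (cmod (\<nu> i) * cmod (\<nu> (\<sigma> i))):]"
      by (simp add: coeff_le_def coeff_pCons split: nat.split)
    then show ?thesis
      using False coeff_dominated_const[of "- A$i$\<sigma> i"] by (simp add: leibniz_factor_def coeff_dominated_coeff_le)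
  qed
qed

lemma coeff_dominated_leibniz_term:
  fixes \<nu> :: "'n::finite \<Rightarrow> complex" and B :: "complex^'n^'n"
  assumes B: "\<And>i j. cmod (B$i$j) \<le> \<epsilon>" and "\<epsilon> \<le> 1" and \<sigma>: "\<sigma> permutes UNIV" "\<sigma> \<noteq> id"
  defines "A \<equiv> diag_mat \<nu> ** (mat 1 + B) ** diag_mat \<nu>"
  shows "coeff_dominated (\<Prod>i\<in>UNIV. leibniz_factor A \<sigma> i)
           (smult (2 ^ CARD('n) * \<epsilon>) (poly_of_root_norms (\<lambda>i. \<nu> i ^ 2) UNIV))"
proof -
  define U where "U i = [:cmod (\<nu> i) ^ 2, 1:]" for i
  define c where "c i = (if \<sigma> i = i then 1 + \<epsilon> else \<epsilon>)" for i
  \<comment> \<open>The entry \<open>A$i$\<sigma> i\<close> is charged \<open>w i * w (\<sigma> i)\<close>; as \<open>\<sigma>\<close> permutes the indices, these charges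
     multiply to \<open>\<Prod>i. w i ^ 2\<close>, which the linear factors of the majorant absorb.\<close>
  define w where "w i = (if \<sigma> i = i then 1 else cmod (\<nu> i))" for i
  define H where "H i = (if \<sigma> i = i then U i else 1)" for i
  have "0 \<le> \<epsilon>" using B by (meson norm_ge_zero order_trans)
  have factor: "coeff_dominated (leibniz_factor A \<sigma> i) (smult (c i * (w i * w (\<sigma> i))) (H i))" for i
  proof (cases "\<sigma> i = i")
    case False
    then have "\<sigma> (\<sigma> i) \<noteq> \<sigma> i" using permutes_inj[OF \<sigma>(1)] by (metis injD)
    then show ?thesis
      using False coeff_dominated_leibniz_factor[OF B, of \<nu> \<sigma> i]
      by (simp add: A_def c_def w_def H_def smult_one)
  qed (use coeff_dominated_leibniz_factor[OF B, of \<nu> \<sigma> i] in \<open>simp add: A_def c_def w_def H_def U_def\<close>)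
  have "(\<Prod>i\<in>UNIV. smult (c i * (w i * w (\<sigma> i))) (H i)) = (\<Prod>i\<in>UNIV. smult (c i) (smult (w i ^ 2) (H i)))"
  proof -
    have "(\<Prod>i\<in>UNIV. w (\<sigma> i)) = (\<Prod>i\<in>UNIV. w i)"
      using prod.permute[OF \<sigma>(1), of w] by (simp add: comp_def)
    then show ?thesis
      by (simp add: prod_smult prod.distrib power2_eq_square)
  qed
  moreover have "coeff_le (\<Prod>i\<in>UNIV. smult (c i) (smult (w i ^ 2) (H i))) (\<Prod>i\<in>UNIV. smult (c i) (U i))"
  proof (rule coeff_le_prod)
    show "coeff_nonneg (smult (c i) (smult (w i ^ 2) (H i)))" for i
      using \<open>0 \<le> \<epsilon>\<close> by (auto simp: coeff_nonneg_def c_def H_def U_def coeff_pCons split: nat.split)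
    show "coeff_le (smult (c i) (smult (w i ^ 2) (H i))) (smult (c i) (U i))" for i
      using \<open>0 \<le> \<epsilon>\<close> by (auto simp: coeff_le_def c_def w_def H_def U_def coeff_pCons split: nat.split)
  qed
  moreover have "(\<Prod>i\<in>UNIV. smult (c i) (U i)) = smult (prod c UNIV) (poly_of_root_norms (\<lambda>i. \<nu> i ^ 2) UNIV)"
    unfolding prod_smult by (simp add: U_def poly_of_root_norms_def norm_power)
  moreover have "prod c UNIV \<le> 2 ^ CARD('n) * \<epsilon>"
    unfolding c_def by (rule prod_if_fixed_le[OF \<sigma>(2) \<open>0 \<le> \<epsilon>\<close> \<open>\<epsilon> \<le> 1\<close>])
  ultimately show ?thesis
    using coeff_dominated_prod[of UNIV "leibniz_factor A \<sigma>", OF factor]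
    by (metis (no_types, lifting) coeff_dominated_coeff_le coeff_le_smult_left coeff_nonneg_poly_of_root_norms)
qed

lemma coeff_dominated_charpoly_perturbation:
  fixes \<nu> :: "'n::finite \<Rightarrow> complex" and B :: "complex^'n^'n"
  assumes B: "\<And>i j. cmod (B$i$j) \<le> \<epsilon>" and "\<epsilon> \<le> 1"
  shows "coeff_dominated (charpoly (diag_mat \<nu> ** (mat 1 + B) ** diag_mat \<nu>) - poly_of_roots (\<lambda>i. \<nu> i ^ 2) UNIV)
           (smult ((1 + fact CARD('n)) * 2 ^ CARD('n) * \<epsilon>) (poly_of_root_norms (\<lambda>i. \<nu> i ^ 2) UNIV))"
proof -
  define n where "n = CARD('n)"
  define A where "A = diag_mat \<nu> ** (mat 1 + B) ** diag_mat \<nu>"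
  define P where "P = poly_of_root_norms (\<lambda>i. \<nu> i ^ 2) UNIV"
  define S where "S = {\<sigma>. \<sigma> permutes (UNIV::'n set)} - {id}"
  have "0 \<le> \<epsilon>" using B by (meson norm_ge_zero order_trans)
  have P: "coeff_nonneg P"
    by (simp add: P_def coeff_nonneg_poly_of_root_norms)
  have "(1 + \<epsilon>) ^ n - 1 \<le> 2 ^ n * \<epsilon>"
    using one_plus_power_minus_one_le[OF \<open>0 \<le> \<epsilon>\<close> \<open>\<epsilon> \<le> 1\<close>, of n] \<open>0 \<le> \<epsilon>\<close> by (simp add: algebra_simps)
  then have diag: "coeff_dominated (poly_of_roots (\<lambda>i. A$i$i) UNIV - poly_of_roots (\<lambda>i. \<nu> i ^ 2) UNIV)
      (smult (2 ^ n * \<epsilon>) P)"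
    using coeff_dominated_diagonal_perturbation[OF B, of \<nu>] coeff_le_smult_left[OF P]
    unfolding A_def P_def n_def by (blast intro: coeff_dominated_coeff_le)
  have "coeff_dominated (\<Sum>\<sigma>\<in>S. smult (of_int (sign \<sigma>)) (\<Prod>i\<in>UNIV. leibniz_factor A \<sigma> i))
      (\<Sum>\<sigma>\<in>S. smult (2 ^ n * \<epsilon>) P)"
  proof (rule coeff_dominated_sum)
    fix \<sigma> assume "\<sigma> \<in> S"
    then have dom: "coeff_dominated (\<Prod>i\<in>UNIV. leibniz_factor A \<sigma> i) (smult (2 ^ n * \<epsilon>) P)"
      using coeff_dominated_leibniz_term[OF B \<open>\<epsilon> \<le> 1\<close>] by (simp add: S_def A_def P_def n_def)
    moreover have "cmod (of_int (sign \<sigma>)) = 1"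
      by (simp add: sign_def)
    ultimately show "coeff_dominated (smult (of_int (sign \<sigma>)) (\<Prod>i\<in>UNIV. leibniz_factor A \<sigma> i))
        (smult (2 ^ n * \<epsilon>) P)"
      using coeff_dominated_smult[OF dom, of "of_int (sign \<sigma>)"] by simp
  qed
  moreover have "(\<Sum>\<sigma>\<in>S. smult (2 ^ n * \<epsilon>) P) = smult (real (card S) * (2 ^ n * \<epsilon>)) P"
    by (simp only: smult_sum[symmetric] sum_constant)
  ultimately have rest: "coeff_dominated (\<Sum>\<sigma>\<in>S. smult (of_int (sign \<sigma>)) (\<Prod>i\<in>UNIV. leibniz_factor A \<sigma> i))
      (smult (real (card S) * (2 ^ n * \<epsilon>)) P)"
    by simp
  have "card S \<le> fact n"
    using card_mono[OF _ Diff_subset, of "{\<sigma>. \<sigma> permutes (UNIV::'n set)}" "{id}"]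
    by (simp add: S_def n_def card_permutations finite_permutations)
  then have le: "2 ^ n * \<epsilon> + real (card S) * (2 ^ n * \<epsilon>) \<le> (1 + fact n) * 2 ^ n * \<epsilon>"
    using \<open>0 \<le> \<epsilon>\<close> mult_right_mono[of "real (card S)" "fact n" "2 ^ n * \<epsilon>"]
    by (simp add: algebra_simps of_nat_le_iff[symmetric, where 'a = real])
  have "charpoly A - poly_of_roots (\<lambda>i. \<nu> i ^ 2) UNIV
      = (poly_of_roots (\<lambda>i. A$i$i) UNIV - poly_of_roots (\<lambda>i. \<nu> i ^ 2) UNIV)
        + (\<Sum>\<sigma>\<in>S. smult (of_int (sign \<sigma>)) (\<Prod>i\<in>UNIV. leibniz_factor A \<sigma> i))"
    unfolding S_def charpoly_split_diagonal[of A] by simp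
  then have "coeff_dominated (charpoly A - poly_of_roots (\<lambda>i. \<nu> i ^ 2) UNIV)
      (smult (2 ^ n * \<epsilon> + real (card S) * (2 ^ n * \<epsilon>)) P)"
    using coeff_dominated_add[OF diag rest] by (simp only: smult_add_left)
  from coeff_dominated_coeff_le[OF this coeff_le_smult_left[OF P le]] show ?thesis
    unfolding A_def P_def n_def .
qed

lemma ex_eigenvalues_enum: "\<exists>lam. eigenvalues_enum (A::complex^'n::finite^'n) lam"
  using charpoly_eq_poly_of_roots[of A] by (simp add: eigenvalues_enum_iff_charpoly)

lemma eigenvalues_close_if_roots_match:
  fixes \<nu> :: "'n::finite \<Rightarrow> complex" and B :: "complex^'n^'n"
  assumes "norm B \<le> 1" "(1 + fact CARD('n)) * 2 ^ CARD('n) * norm B \<le> \<eta>"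
    and match: "\<And>b. coeff_dominated (poly_of_roots b UNIV - poly_of_roots (\<lambda>j. \<nu> j ^ 2) UNIV)
                      (smult \<eta> (poly_of_root_norms (\<lambda>j. \<nu> j ^ 2) UNIV)) \<Longrightarrow>
           \<exists>\<sigma>. \<sigma> permutes UNIV \<and> (\<forall>j. norm (b (\<sigma> j) - \<nu> j ^ 2) \<le> e j)"
  shows "\<exists>lam. eigenvalues_enum (diag_mat \<nu> ** (mat 1 + B) ** diag_mat \<nu>) lam \<and> (\<forall>j. norm (lam j - \<nu> j ^ 2) \<le> e j)"
proof -
  define A where "A = diag_mat \<nu> ** (mat 1 + B) ** diag_mat \<nu>"
  obtain b where b: "charpoly A = poly_of_roots b (UNIV :: 'n set)"
    using charpoly_eq_poly_of_roots[of A] by blast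
  have "coeff_dominated (charpoly A - poly_of_roots (\<lambda>j. \<nu> j ^ 2) UNIV)
      (smult \<eta> (poly_of_root_norms (\<lambda>j. \<nu> j ^ 2) UNIV))"
    using coeff_dominated_charpoly_perturbation[of B "norm B" \<nu>, OF _ assms(1)]
      order_trans[OF Finite_Cartesian_Product.norm_nth_le Finite_Cartesian_Product.norm_nth_le]
      coeff_le_smult_left[OF coeff_nonneg_poly_of_root_norms assms(2)]
    unfolding A_def by (blast intro: coeff_dominated_coeff_le)
  then obtain \<sigma> where "\<sigma> permutes UNIV" "\<forall>j. norm (b (\<sigma> j) - \<nu> j ^ 2) \<le> e j"
    using match unfolding b by blast
  moreover from this(1) have "eigenvalues_enum A (b \<circ> \<sigma>)"
    by (simp add: eigenvalues_enum_iff_charpoly b poly_of_roots_permute)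
  ultimately show ?thesis
    unfolding A_def by auto
qed

lemma le_real_root_Suc_power:
  assumes "0 \<le> x" "x \<le> 1"
  shows "x \<le> root (Suc p) x ^ p"
proof -
  have "x = root (Suc p) x ^ Suc p"
    using assms(1) by (simp add: real_root_pow_pos2 del: power_Suc)
  also have "\<dots> \<le> root (Suc p) x ^ p"
    using assms by (intro power_decreasing) auto
  finally show ?thesis .
qed

lemma eigenvalues_relative_perturbation:
  obtains p K \<delta> where "0 < \<delta>" "0 \<le> K"
    "\<And>(\<nu> :: 'n::finite \<Rightarrow> complex) B. \<exists>lam. eigenvalues_enum (diag_mat \<nu> ** (mat 1 + B) ** diag_mat \<nu>) lam \<and>
       (norm B \<le> \<delta> \<longrightarrow> (\<forall>j. cmod (lam j - \<nu> j ^ 2) \<le> K * root (Suc p) (norm B) * cmod (\<nu> j ^ 2)))"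
proof -
  obtain p K \<theta>0 where "0 < \<theta>0" "0 \<le> K" and match:
    "\<And>(I::'n set) (a::'n \<Rightarrow> complex) b \<theta>. finite I \<Longrightarrow> card I = CARD('n) \<Longrightarrow> 0 \<le> \<theta> \<Longrightarrow> \<theta> \<le> \<theta>0 \<Longrightarrow>
        coeff_dominated (poly_of_roots b I - poly_of_roots a I) (smult (\<theta> ^ p) (poly_of_root_norms a I)) \<Longrightarrow>
        \<exists>\<sigma>. \<sigma> permutes I \<and> (\<forall>j\<in>I. norm (b (\<sigma> j) - a j) \<le> K * \<theta> * norm (a j))"
    by (rule roots_match[where 'i = 'n and 'a = complex, of "CARD('n)"]) (rule that)
  define C where "C = (1 + fact CARD('n)) * (2::real) ^ CARD('n)"
  define \<theta>1 where "\<theta>1 = min \<theta>0 1"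
  have "1 * 1 \<le> C"
    unfolding C_def by (intro mult_mono) auto
  have "0 < \<theta>1" "\<theta>1 \<le> 1"
    using \<open>0 < \<theta>0\<close> by (auto simp: \<theta>1_def)
  show thesis
  proof (rule that[of "\<theta>1 ^ Suc p / C" "K * root (Suc p) C" p])
    show "0 < \<theta>1 ^ Suc p / C" "0 \<le> K * root (Suc p) C"
      using \<open>1 * 1 \<le> C\<close> \<open>0 < \<theta>1\<close> \<open>0 \<le> K\<close> by simp_all
    fix \<nu> :: "'n \<Rightarrow> complex" and B :: "complex^'n^'n"
    show "\<exists>lam. eigenvalues_enum (diag_mat \<nu> ** (mat 1 + B) ** diag_mat \<nu>) lam \<and>
      (norm B \<le> \<theta>1 ^ Suc p / C \<longrightarrow>
        (\<forall>j. cmod (lam j - \<nu> j ^ 2) \<le> K * root (Suc p) C * root (Suc p) (norm B) * cmod (\<nu> j ^ 2)))"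
    proof (cases "norm B \<le> \<theta>1 ^ Suc p / C")
      case True
      \<comment> \<open>With \<open>\<theta> ^ Suc p = C * norm B\<close> the perturbation bound \<open>C * norm B\<close> is at most \<open>\<theta> ^ p\<close>.\<close>
      define \<theta> where "\<theta> = root (Suc p) (C * norm B)"
      have small: "C * norm B \<le> \<theta>1 ^ Suc p"
        using True \<open>1 * 1 \<le> C\<close> by (simp add: field_simps)
      moreover have "\<theta>1 ^ Suc p \<le> 1"
        using \<open>0 < \<theta>1\<close> \<open>\<theta>1 \<le> 1\<close> by (intro power_le_one) auto
      ultimately have "C * norm B \<le> \<theta> ^ p" "norm B \<le> 1"
        using \<open>1 * 1 \<le> C\<close> le_real_root_Suc_power[of "C * norm B" p] mult_right_mono[of 1 C "norm B"]
        by (simp_all add: \<theta>_def)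
      have "\<theta> \<le> root (Suc p) (\<theta>1 ^ Suc p)"
        unfolding \<theta>_def using small by (intro real_root_le_mono) auto
      also have "\<dots> = \<theta>1"
        using \<open>0 < \<theta>1\<close> by (intro real_root_power_cancel) auto
      finally have "\<theta> \<le> \<theta>1" .
      have "0 \<le> \<theta>"
        using \<open>1 * 1 \<le> C\<close> by (simp add: \<theta>_def)
      have "\<exists>lam. eigenvalues_enum (diag_mat \<nu> ** (mat 1 + B) ** diag_mat \<nu>) lam \<and>
          (\<forall>j. norm (lam j - \<nu> j ^ 2) \<le> K * \<theta> * norm (\<nu> j ^ 2))"
        using \<open>norm B \<le> 1\<close> \<open>C * norm B \<le> \<theta> ^ p\<close> \<open>0 \<le> \<theta>\<close> \<open>\<theta> \<le> \<theta>1\<close>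
          match[where I = UNIV and a = "\<lambda>j. \<nu> j ^ 2" and \<theta> = \<theta>]
        by (intro eigenvalues_close_if_roots_match) (auto simp: C_def \<theta>1_def)
      then show ?thesis
        by (simp add: \<theta>_def real_root_mult mult.assoc) blast
    qed (use ex_eigenvalues_enum in blast)
  qed
qed

section \<open>Functions of order \<open>h\<^sup>\<infinity>\<close>\<close>

lemma O_h_infty_eventually_norm_le:
  assumes "O_h_infty f" "0 < t"
  shows "\<forall>\<^sub>F h in at_right 0. norm (f h) \<le> t"
proof -
  obtain C where C: "\<forall>\<^sub>F h in at_right 0. norm (f h) \<le> C * h ^ 1"
    using assms(1) unfolding O_h_infty_def by blast
  have "((\<lambda>h. C * h) \<longlongrightarrow> 0) (at_right (0::real))"
    by (auto intro!: tendsto_eq_intros)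
  then have "\<forall>\<^sub>F h in at_right 0. C * h < t"
    using order_tendstoD(2) assms(2) by blast
  with C show ?thesis
    by eventually_elim simp
qed

lemma O_h_infty_root:
  assumes "O_h_infty f"
  shows "O_h_infty (\<lambda>h. root (Suc p) (norm (f h)))"
  unfolding O_h_infty_def
proof
  fix N :: nat
  obtain C where C: "\<forall>\<^sub>F h in at_right 0. norm (f h) \<le> C * h ^ (Suc p * N)"
    using assms unfolding O_h_infty_def by blast
  have "\<forall>\<^sub>F h in at_right 0. norm (root (Suc p) (norm (f h))) \<le> root (Suc p) (max C 0) * h ^ N"
    using C eventually_at_right_less[of "0::real"]
  proof eventually_elim
    case (elim h)
    have "norm (f h) \<le> max C 0 * h ^ (Suc p * N)"
      using elim by (intro order_trans[OF elim(1)] mult_right_mono) auto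
    also have "h ^ (Suc p * N) = (h ^ N) ^ Suc p"
      by (metis mult.commute power_mult)
    finally have "norm (f h) \<le> max C 0 * (h ^ N) ^ Suc p" .
    then have "root (Suc p) (norm (f h)) \<le> root (Suc p) (max C 0 * (h ^ N) ^ Suc p)"
      by (rule real_root_le_mono[rotated]) simp
    also have "\<dots> = root (Suc p) (max C 0) * root (Suc p) ((h ^ N) ^ Suc p)"
      by (rule real_root_mult)
    also have "root (Suc p) ((h ^ N) ^ Suc p) = h ^ N"
      using elim(2) by (intro real_root_power_cancel) auto
    finally show ?case by simp
  qed
  then show "\<exists>C. \<forall>\<^sub>F h in at_right 0. norm (root (Suc p) (norm (f h))) \<le> C * h ^ N" ..
qed

lemma O_h_infty_by_comparison:
  assumes "O_h_infty g" "\<forall>\<^sub>F h in at_right 0. norm (f h) \<le> c * norm (g h)"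
  shows "O_h_infty f"
  unfolding O_h_infty_def
proof
  fix N :: nat
  obtain C where "\<forall>\<^sub>F h in at_right 0. norm (g h) \<le> C * h ^ N"
    using assms(1) unfolding O_h_infty_def by blast
  with assms(2) have "\<forall>\<^sub>F h in at_right 0. norm (f h) \<le> (\<bar>c\<bar> * C) * h ^ N"
  proof eventually_elim
    case (elim h)
    have "c * norm (g h) \<le> \<bar>c\<bar> * norm (g h)"
      by (intro mult_right_mono) auto
    also have "\<dots> \<le> \<bar>c\<bar> * (C * h ^ N)"
      using elim(2) by (intro mult_left_mono) auto
    finally show ?case using elim(1) by (simp add: mult.assoc)
  qed
  then show "\<exists>C. \<forall>\<^sub>F h in at_right 0. norm (f h) \<le> C * h ^ N" ..
qed

(* For a = 0 the hypothesis forces l = 0, and the junk value (l - a) / 0 = 0 makes both claims hold. *)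
lemma relative_error_le:
  fixes l a :: "'a::real_normed_field"
  assumes "norm (l - a) \<le> c * norm a" "0 \<le> c"
  shows "l = a * (1 + (l - a) / a)" "norm ((l - a) / a) \<le> c"
proof -
  have "a = 0 \<Longrightarrow> l = 0"
    using assms(1) by simp
  then show "l = a * (1 + (l - a) / a)"
    by (cases "a = 0") (simp_all add: field_simps)
  show "norm ((l - a) / a) \<le> c"
    using assms by (cases "a = 0") (simp_all add: norm_divide divide_le_eq)
qed

lemma O_h_infty_relative_error:
  fixes lam a :: "real \<Rightarrow> 'a::real_normed_field"
  assumes E: "O_h_infty E" and "0 < \<delta>" "0 \<le> K"
    and close: "\<And>h. norm (E h) \<le> \<delta> \<Longrightarrow> norm (lam h - a h) \<le> K * root (Suc p) (norm (E h)) * norm (a h)"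
  shows "\<forall>\<^sub>F h in at_right 0. lam h = a h * (1 + (lam h - a h) / a h)"
    and "O_h_infty (\<lambda>h. (lam h - a h) / a h)"
proof -
  have "\<forall>\<^sub>F h in at_right 0. norm (E h) \<le> \<delta>"
    using O_h_infty_eventually_norm_le[OF E \<open>0 < \<delta>\<close>] .
  then have rel: "\<forall>\<^sub>F h in at_right 0. lam h = a h * (1 + (lam h - a h) / a h) \<and>
      norm ((lam h - a h) / a h) \<le> K * norm (root (Suc p) (norm (E h)))"
  proof eventually_elim
    case (elim h)
    have "0 \<le> K * root (Suc p) (norm (E h))"
      using \<open>0 \<le> K\<close> by simp
    then show ?case
      using relative_error_le[OF close[OF elim]] by simp
  qed
  then show "\<forall>\<^sub>F h in at_right 0. lam h = a h * (1 + (lam h - a h) / a h)"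
    by eventually_elim blast
  from rel have "\<forall>\<^sub>F h in at_right 0. norm ((lam h - a h) / a h) \<le> K * norm (root (Suc p) (norm (E h)))"
    by eventually_elim blast
  then show "O_h_infty (\<lambda>h. (lam h - a h) / a h)"
    by (rule O_h_infty_by_comparison[OF O_h_infty_root[OF E, of p]])
qed

theorem lemma6p2:
  fixes \<nu> :: "'n::finite \<Rightarrow> real \<Rightarrow> complex"
    and E :: "real \<Rightarrow> complex^'n^'n"
    and M :: "real \<Rightarrow> complex^'n^'n"
  assumes E_small: "O_h_infty E"
    and M_def: "\<And>h. M h = diag_mat (\<lambda>j. \<nu> j h) ** (mat 1 + E h) ** diag_mat (\<lambda>j. \<nu> j h)"
  shows "\<exists>lam :: real \<Rightarrow> 'n \<Rightarrow> complex. \<exists>r :: 'n \<Rightarrow> real \<Rightarrow> complex.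
           (\<forall>h. eigenvalues_enum (M h) (lam h))
         \<and> (\<forall>\<^sub>F h in at_right 0. \<forall>j. lam h j = (\<nu> j h)\<^sup>2 * (1 + r j h))
         \<and> (\<forall>j. O_h_infty (r j))"
proof (rule eigenvalues_relative_perturbation)
  fix p K \<delta>
  assume "0 < \<delta>" "0 \<le> K" and perturbation:
    "\<And>(\<nu> :: 'n \<Rightarrow> complex) B. \<exists>lam. eigenvalues_enum (diag_mat \<nu> ** (mat 1 + B) ** diag_mat \<nu>) lam \<and>
       (norm B \<le> \<delta> \<longrightarrow> (\<forall>j. cmod (lam j - \<nu> j ^ 2) \<le> K * root (Suc p) (norm B) * cmod (\<nu> j ^ 2)))"
  have "\<forall>h. \<exists>l. eigenvalues_enum (M h) l \<and> (norm (E h) \<le> \<delta> \<longrightarrow>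
      (\<forall>j. cmod (l j - \<nu> j h ^ 2) \<le> K * root (Suc p) (norm (E h)) * cmod (\<nu> j h ^ 2)))"
    unfolding M_def using perturbation by blast
  then obtain lam where lam: "\<And>h. eigenvalues_enum (M h) (lam h)" and close: "\<And>h j. norm (E h) \<le> \<delta> \<Longrightarrow>
      cmod (lam h j - \<nu> j h ^ 2) \<le> K * root (Suc p) (norm (E h)) * cmod (\<nu> j h ^ 2)"
    unfolding choice_iff by blast
  define r where "r j h = (lam h j - \<nu> j h ^ 2) / \<nu> j h ^ 2" for j h
  have rel: "\<forall>\<^sub>F h in at_right 0. lam h j = (\<nu> j h)\<^sup>2 * (1 + r j h)" "O_h_infty (r j)" for j
    using O_h_infty_relative_error[OF E_small \<open>0 < \<delta>\<close> \<open>0 \<le> K\<close>, of "\<lambda>h. lam h j" "\<lambda>h. \<nu> j h ^ 2"] close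
    unfolding r_def by auto
  show ?thesis
    by (intro exI[of _ lam] exI[of _ r] conjI allI eventually_all_finite lam rel)
qed

end
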